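(* Fix a slot $n$, a state $(\mathbf x(n),\mathbf g(n))$ of the model in the context, and a policy $\pi\in\Pi_{n-1}$ choosing the withdrawal vector $\mathbf y(n)$ at slot $n$. Let $\mathbf D=\mathbf y^{MB}(n)-\mathbf y(n)$ and let $F=\{f: D_f\ge+1\}$ and $T=\{t:D_t\le-1\}$, assumed non-empty. Then there exist $f\in F$ and $t\in T$ such that the interchange $\mathbf I(f,t)$ is feasible.
   Context: Model: real queues $1,\dots,L$, dummy queue $0$, $K$ identical servers. State: queue lengths $x_i(n)\in\mathbb Z_+$ ($x_0=0$), connectivities $g_{i,j}(n)\in\{0,1\}$ ($g_{0,j}=1$). A scheduling control $\mathbf q\in\{0,\dots,L\}^K$ (server $j$ serves $q_j$, $0$ = idle) is feasible if $g_{q_j,j}=1$ for all $j$ and each real queue $i$ gets at most $x_i$ servers; withdrawal vector $y_i=\#\{j:q_j=i\}$; feasible withdrawal vectors arise from feasible controls. A policy chooses at each slot a feasible withdrawal vector as a measurable function of history. Updated sizes $\hat x_i=x_i-y_i$; imbalance index $\kappa_t=\sum_{i=1}^{L}\sum_{j=i+1}^{L+1}(\hat x_{[i]}-\hat x_{[j]})$ with $[1],\dots,[L]$ ordering the real queues by non-increasing $\hat x$, $[L+1]=0$. MB property at slot $t$: the chosen vector minimizes $\kappa_t$ over feasible vectors; an MB policy has it at every slot; $\Pi_{n-1}$ = policies having it at all slots $t\le n-1$. $\mathbf y^{MB}(n)$ is the vector chosen by an MB policy at slot $n$ in the same state. Interchange $\mathbf I(f,t)$ ($f\ne t$): $+1$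 at $f$, $-1$ at $t$, $0$ elsewhere; feasible if $\mathbf y(n)+\mathbf I(f,t)$ is a feasible withdrawal vector. *)

theory Defs
  imports Main
begin

text \<open>Real queues are indexed 1..L, the dummy queue is 0, servers are indexed 1..K.
  Queue lengths: x :: nat => nat (x i for i in 1..L; x 0 is irrelevant, the dummy queue
  has no capacity constraint).  Connectivities: g i j for real queue i and server j
  (the dummy queue is always connected).  A scheduling control q maps server j to q j in 0..L.\<close>

definition feasible_control ::
  "nat \<Rightarrow> nat \<Rightarrow> (nat \<Rightarrow> nat) \<Rightarrow> (nat \<Rightarrow> nat \<Rightarrow> bool) \<Rightarrow> (nat \<Rightarrow> nat) \<Rightarrow> bool" where
  "feasible_control L K x g q \<longleftrightarrow>
     (\<forall>j\<in>{1..K}. q j \<le> L \<and> (q j = 0 \<or> g (q j) j)) \<and>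
     (\<forall>i\<in>{1..L}. card {j\<in>{1..K}. q j = i} \<le> x i)"

definition withdrawal :: "nat \<Rightarrow> (nat \<Rightarrow> nat) \<Rightarrow> nat \<Rightarrow> int" where
  "withdrawal K q i = int (card {j\<in>{1..K}. q j = i})"

definition feasible_withdrawal ::
  "nat \<Rightarrow> nat \<Rightarrow> (nat \<Rightarrow> nat) \<Rightarrow> (nat \<Rightarrow> nat \<Rightarrow> bool) \<Rightarrow> (nat \<Rightarrow> int) \<Rightarrow> bool" where
  "feasible_withdrawal L K x g y \<longleftrightarrow>
     (\<exists>q. feasible_control L K x g q \<and> (\<forall>i\<in>{0..L}. y i = withdrawal K q i))"

text \<open>Imbalance index: sort updated sizes xhat_i = x_i - y_i (i = 1..L) non-increasingly,
  append xhat_[L+1] = 0, and sum the pairwise differences xhat_[i] - xhat_[j], i < j.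
  (0-based list positions below.)\<close>
definition imbalance :: "nat \<Rightarrow> (nat \<Rightarrow> nat) \<Rightarrow> (nat \<Rightarrow> int) \<Rightarrow> int" where
  "imbalance L x y =
     (let s = rev (sort (map (\<lambda>i. int (x i) - y i) [1..<L+1])) @ [0]
      in (\<Sum>i<L. \<Sum>j\<in>{i+1..L}. s ! i - s ! j))"

definition is_MB ::
  "nat \<Rightarrow> nat \<Rightarrow> (nat \<Rightarrow> nat) \<Rightarrow> (nat \<Rightarrow> nat \<Rightarrow> bool) \<Rightarrow> (nat \<Rightarrow> int) \<Rightarrow> bool" where
  "is_MB L K x g y \<longleftrightarrow> feasible_withdrawal L K x g y \<and>
     (\<forall>y'. feasible_withdrawal L K x g y' \<longrightarrow> imbalance L x y \<le> imbalance L x y')"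

definition interchange :: "nat \<Rightarrow> nat \<Rightarrow> nat \<Rightarrow> int" where
  "interchange f t i = (if i = f then 1 else if i = t then -1 else 0)"

end

theory Submission
  imports Defs
begin

text \<open>An augmenting-path argument. Realise \<open>y\<close> and \<open>yMB\<close> by feasible controls \<open>q\<close> and \<open>q'\<close>,
  and pick \<open>f\<close> with \<open>D\<^sub>f \<ge> 1\<close>. Some server \<open>j\<close> serves \<open>f\<close> under \<open>q'\<close> but not under \<open>q\<close>;
  moving it to \<open>f\<close> keeps the control feasible (\<open>f\<close> still gets no more servers than under \<open>q'\<close>)
  and realises \<open>y + I(f, q j)\<close>. If \<open>q j\<close> lies in \<open>T\<close> we are done; otherwise \<open>q j\<close> now has a
  deficit w.r.t. \<open>q'\<close> and we repeat from \<open>q j\<close>. The number of servers on which the control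
  disagrees with \<open>q'\<close> decreases, and the interchanges telescope to \<open>I(f, t)\<close>.\<close>

lemma withdrawal_fun_upd:
  assumes "j \<in> {1..K}" "q j \<noteq> f"
  shows "withdrawal K (q(j := f)) i = withdrawal K q i + interchange f (q j) i"
proof -
  have fin: "finite {k\<in>{1..K}. q k = i}" by simp
  consider "i = f" | "i = q j" | "i \<noteq> f" "i \<noteq> q j" by blast
  then show ?thesis
  proof cases
    case 1
    then have "{k\<in>{1..K}. (q(j := f)) k = i} = insert j {k\<in>{1..K}. q k = i}"
      "j \<notin> {k\<in>{1..K}. q k = i}" using assms by auto
    then show ?thesis using 1 fin by (simp add: withdrawal_def interchange_def)
  next
    case 2
    then have "{k\<in>{1..K}. (q(j := f)) k = i} = {k\<in>{1..K}. q k = i} - {j}"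
      "j \<in> {k\<in>{1..K}. q k = i}" using assms by auto
    moreover have "card {k\<in>{1..K}. q k = i} > 0"
      using calculation(2) fin card_gt_0_iff by blast
    ultimately show ?thesis using 2 assms(2) fin
      by (simp add: withdrawal_def interchange_def of_nat_diff)
  next
    case 3
    then have "{k\<in>{1..K}. (q(j := f)) k = i} = {k\<in>{1..K}. q k = i}" by auto
    then show ?thesis using 3 by (simp add: withdrawal_def interchange_def)
  qed
qed

lemma withdrawal_less_imp_server:
  assumes "withdrawal K q f < withdrawal K q' f"
  obtains j where "j \<in> {1..K}" "q' j = f" "q j \<noteq> f"
proof -
  have "\<not> {j\<in>{1..K}. q' j = f} \<subseteq> {j\<in>{1..K}. q j = f}"
  proof
    assume "{j\<in>{1..K}. q' j = f} \<subseteq> {j\<in>{1..K}. q j = f}"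
    then have "withdrawal K q' f \<le> withdrawal K q f"
      unfolding withdrawal_def by (simp add: card_mono)
    then show False using assms by simp
  qed
  then show ?thesis using that by blast
qed

lemma feasible_control_fun_upd:
  assumes q: "feasible_control L K x g q" and q': "feasible_control L K x g q'"
    and j: "j \<in> {1..K}" "q j \<noteq> q' j"
    and less: "withdrawal K q (q' j) < withdrawal K q' (q' j)"
  shows "feasible_control L K x g (q(j := q' j))"
  unfolding feasible_control_def
proof (rule conjI; intro ballI)
  fix k assume "k \<in> {1..K}"
  then show "(q(j := q' j)) k \<le> L \<and> ((q(j := q' j)) k = 0 \<or> g ((q(j := q' j)) k) k)"
    using q q' j(1) by (cases "k = j") (auto simp: feasible_control_def)
next
  fix i assume i: "i \<in> {1..L}"
  have "withdrawal K q i \<le> int (x i)" "withdrawal K q' i \<le> int (x i)"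
    using q q' i by (auto simp: feasible_control_def withdrawal_def)
  then have "withdrawal K (q(j := q' j)) i \<le> int (x i)"
    using less withdrawal_fun_upd[of j K q "q' j", OF j] by (auto simp: interchange_def)
  then show "card {k\<in>{1..K}. (q(j := q' j)) k = i} \<le> x i"
    by (simp add: withdrawal_def)
qed

lemma feasible_control_augmenting_interchange:
  assumes "feasible_control L K x g q" "feasible_control L K x g q'"
    and "withdrawal K q f < withdrawal K q' f"
  shows "\<exists>t\<le>L. withdrawal K q' t < withdrawal K q t \<and>
           (\<exists>q''. feasible_control L K x g q'' \<and>
              withdrawal K q'' = (\<lambda>i. withdrawal K q i + interchange f t i))"
  using assms
proof (induction "card {j\<in>{1..K}. q j \<noteq> q' j}" arbitrary: q f rule: less_induct)
  case less
  note q = less.prems(1) and q' = less.prems(2) and deficit = less.prems(3)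
  obtain j where j: "j \<in> {1..K}" "q' j = f" "q j \<noteq> f"
    using withdrawal_less_imp_server[OF deficit] .
  define s where "s = q j"
  define q1 where "q1 = q(j := f)"
  have q1: "feasible_control L K x g q1"
    using feasible_control_fun_upd[OF q q' j(1)] j(2,3) deficit by (simp add: q1_def)
  have w1: "withdrawal K q1 = (\<lambda>i. withdrawal K q i + interchange f s i)"
    using withdrawal_fun_upd[of j K q f, OF j(1,3)] by (auto simp: q1_def s_def)
  have sL: "s \<le> L" "f \<noteq> s" using q j by (auto simp: feasible_control_def s_def)
  show ?case
  proof (cases "withdrawal K q' s < withdrawal K q s")
    case True
    then show ?thesis using sL q1 w1 by blast
  next
    case False
    have deficit1: "withdrawal K q1 s < withdrawal K q' s"
      using False w1 sL(2) by (simp add: interchange_def)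
    have "{k\<in>{1..K}. q1 k \<noteq> q' k} \<subset> {k\<in>{1..K}. q k \<noteq> q' k}"
      using j by (auto simp: q1_def)
    then have "card {k\<in>{1..K}. q1 k \<noteq> q' k} < card {k\<in>{1..K}. q k \<noteq> q' k}"
      by (simp add: psubset_card_mono)
    from less.hyps[OF this q1 q' deficit1] obtain t q'' where
      t: "t \<le> L" "withdrawal K q' t < withdrawal K q1 t" "feasible_control L K x g q''"
      and w'': "withdrawal K q'' = (\<lambda>i. withdrawal K q1 i + interchange s t i)"
      by blast
    have "t \<noteq> s" using t(2) deficit1 by auto
    moreover have "t \<noteq> f" using t(2) w1 deficit sL(2) by (auto simp: interchange_def)
    ultimately have "withdrawal K q'' = (\<lambda>i. withdrawal K q i + interchange f t i)"
      "withdrawal K q' t < withdrawal K q t"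
      using w'' w1 t(2) sL(2) by (auto simp: interchange_def)
    then show ?thesis using t(1,3) by blast
  qed
qed

lemma feasible_withdrawal_augmenting_interchange:
  assumes y: "feasible_withdrawal L K x g y" and y': "feasible_withdrawal L K x g y'"
    and f: "f \<le> L" "y f < y' f"
  shows "\<exists>t\<le>L. y' t < y t \<and> feasible_withdrawal L K x g (\<lambda>i. y i + interchange f t i)"
proof -
  obtain q where q: "feasible_control L K x g q" "\<forall>i\<in>{0..L}. y i = withdrawal K q i"
    using y unfolding feasible_withdrawal_def by blast
  obtain q' where q': "feasible_control L K x g q'" "\<forall>i\<in>{0..L}. y' i = withdrawal K q' i"
    using y' unfolding feasible_withdrawal_def by blast
  have "withdrawal K q f < withdrawal K q' f" using f q(2) q'(2) by simp
  from feasible_control_augmenting_interchange[OF q(1) q'(1) this] obtain t q'' where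
    "t \<le> L" "withdrawal K q' t < withdrawal K q t" "feasible_control L K x g q''"
    "withdrawal K q'' = (\<lambda>i. withdrawal K q i + interchange f t i)"
    by blast
  then show ?thesis using q(2) q'(2) unfolding feasible_withdrawal_def by (intro exI[of _ t]) auto
qed

theorem mainTheorem13:
  fixes L K :: nat and x :: "nat \<Rightarrow> nat" and g :: "nat \<Rightarrow> nat \<Rightarrow> bool"
    and y yMB :: "nat \<Rightarrow> int"
  assumes y_feas: "feasible_withdrawal L K x g y"
    and MB: "is_MB L K x g yMB"
    and F_ne: "{f\<in>{0..L}. yMB f - y f \<ge> 1} \<noteq> {}"
    and T_ne: "{t\<in>{0..L}. yMB t - y t \<le> -1} \<noteq> {}"
  shows "\<exists>f\<in>{f\<in>{0..L}. yMB f - y f \<ge> 1}. \<exists>t\<in>{t\<in>{0..L}. yMB t - y t \<le> -1}.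
           feasible_withdrawal L K x g (\<lambda>i. y i + interchange f t i)"
proof -
  obtain f where f: "f \<in> {0..L}" "yMB f - y f \<ge> 1" using F_ne by auto
  have "feasible_withdrawal L K x g yMB" using MB by (simp add: is_MB_def)
  moreover have "f \<le> L" "y f < yMB f" using f by auto
  ultimately obtain t where
    "t \<le> L" "yMB t < y t" "feasible_withdrawal L K x g (\<lambda>i. y i + interchange f t i)"
    using feasible_withdrawal_augmenting_interchange[OF y_feas] by blast
  then show ?thesis using f by (intro bexI[of _ f] bexI[of _ t]) auto
qed

end
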